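(* Let $G$ be a connected graph and $T$ a rooted spanning tree of $G$ whose vertices are identified with their preorder labels. Consider the following marking process. For each cross edge $(u,v)$ with $u\le v$, both endpoints $u$ and $v$ receive a message "Mark up to $\mathrm{LCA}(u,v)$" (carrying the pair $(u,v)$). Each vertex $w$ waits until it has received all messages destined for it from its children in $T$ and from its incident cross edges; if the received messages are "Mark up to $\mathrm{LCA}(u_i,v_i)$" for $i=1,\dots,k$ (with $k\ge1$), it computes $u_{\min}=\min_i u_i$ and $v_{\max}=\max_i v_i$; if $w$ is an ancestor of both $u_{\min}$ and $v_{\max}$ it sends nothing; otherwise it sends "Mark up to $\mathrm{LCA}(u_{\min},v_{\max})$" to its parent and marks the edge joining $w$ to its parent. (A vertex receiving no message sends nothing.) Then this process correctly marks $\mathrm{Chain}(\mathrm{LCA}(u,v),u)$ and $\mathrm{Chain}(\mathrm{LCA}(u,v),v)$ for every cross edge $(u,v)$: the set of marked edges is exactly $\bigcup_{(u,v)} \big(\mathrm{Chain}(\mathrm{LCA}(u,v),u)\cup\mathrm{Chain}(\mathrm{LCA}(u,v),v)\big)$, the union over all cross edges.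
   Context: Cross edges are the edges of $G$ not in $T$. Preorder labeling of $T$: the root receives label $1$; whenever a vertex receives label $\ell$, its children are ordered arbitrarily as $c_1,\dots,c_k$ and child $c_i$ receives label $\ell+1+\sum_{j<i}\#\mathrm{desc}(c_j)$, where $\#\mathrm{desc}(c)$ is the number of descendants of $c$ (including $c$); $\le$, $\min$, $\max$ refer to labels. Every vertex is an ancestor of itself; $\mathrm{LCA}(u,v)$ is the lowest common ancestor in $T$. When $v'$ is an ancestor of $v$, $\mathrm{Chain}(v',v)$ is the set of edges on the tree path from $v'$ to $v$. *)

theory Defs
  imports Main
begin

text \<open>Vertices are the preorder labels 1..n; the root is 1. The rooted spanning
tree T is given by a parent function par (par v is the parent of v for v in 2..n;
the value par 1 is irrelevant).\<close>

definition anc :: "(nat \<Rightarrow> nat) \<Rightarrow> nat \<Rightarrow> nat \<Rightarrow> bool" where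
  "anc par a v \<longleftrightarrow> (\<exists>k. (par ^^ k) v = a \<and> (\<forall>j<k. (par ^^ j) v \<noteq> 1))"

definition rooted_tree :: "nat \<Rightarrow> (nat \<Rightarrow> nat) \<Rightarrow> bool" where
  "rooted_tree n par \<longleftrightarrow> 1 \<le> n \<and> (\<forall>v\<in>{2..n}. par v \<in> {1..n})
     \<and> (\<forall>v\<in>{1..n}. anc par 1 v)"

definition children :: "(nat \<Rightarrow> nat) \<Rightarrow> nat \<Rightarrow> nat \<Rightarrow> nat set" where
  "children par n w = {c \<in> {2..n}. par c = w}"

definition ndesc :: "(nat \<Rightarrow> nat) \<Rightarrow> nat \<Rightarrow> nat \<Rightarrow> nat" where
  "ndesc par n c = card {x \<in> {1..n}. anc par c x}"

text \<open>Preorder labelling: root gets 1 (built in), and the children of a vertex w,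
listed in increasing order, get labels w + 1 + sum of the subtree sizes of the
earlier children.\<close>
definition preorder_labeled :: "(nat \<Rightarrow> nat) \<Rightarrow> nat \<Rightarrow> bool" where
  "preorder_labeled par n \<longleftrightarrow>
     (\<forall>w\<in>{1..n}. \<forall>c\<in>children par n w.
        c = w + 1 + (\<Sum>c'\<in>{c' \<in> children par n w. c' < c}. ndesc par n c'))"

definition tree_edges :: "(nat \<Rightarrow> nat) \<Rightarrow> nat \<Rightarrow> nat set set" where
  "tree_edges par n = {{par v, v} | v. v \<in> {2..n}}"

definition cross_edges :: "nat set set \<Rightarrow> (nat \<Rightarrow> nat) \<Rightarrow> nat \<Rightarrow> nat set set" where
  "cross_edges E par n = E - tree_edges par n"

definition LCA :: "(nat \<Rightarrow> nat) \<Rightarrow> nat \<Rightarrow> nat \<Rightarrow> nat \<Rightarrow> nat" where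
  "LCA par n u v = (THE a. a \<in> {1..n} \<and> anc par a u \<and> anc par a v \<and>
      (\<forall>b\<in>{1..n}. anc par b u \<and> anc par b v \<longrightarrow> anc par b a))"

definition Chain :: "(nat \<Rightarrow> nat) \<Rightarrow> nat \<Rightarrow> nat \<Rightarrow> nat set set" where
  "Chain par a v = {{par x, x} | x. anc par a x \<and> anc par x v \<and> x \<noteq> a}"

text \<open>Messages received by w: one (u,v) for each incident cross edge {u,v}, u<v,
and the messages sent by its children (out c = Some m means c sends m to its parent).\<close>
definition inbox :: "nat set set \<Rightarrow> (nat \<Rightarrow> nat) \<Rightarrow> nat \<Rightarrow> (nat \<Rightarrow> (nat \<times> nat) option)
     \<Rightarrow> nat \<Rightarrow> (nat \<times> nat) set" where
  "inbox E par n out w =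
     {(u, v). {u, v} \<in> cross_edges E par n \<and> u < v \<and> (w = u \<or> w = v)}
     \<union> {m. \<exists>c\<in>children par n w. out c = Some m}"

definition process_out :: "nat set set \<Rightarrow> (nat \<Rightarrow> nat) \<Rightarrow> nat \<Rightarrow> (nat \<Rightarrow> (nat \<times> nat) option)
     \<Rightarrow> nat \<Rightarrow> (nat \<times> nat) option" where
  "process_out E par n out w =
     (let M = inbox E par n out w in
      if M = {} then None
      else (let umin = Min (fst ` M); vmax = Max (snd ` M) in
            if anc par w umin \<and> anc par w vmax then None else Some (umin, vmax)))"

definition marked :: "(nat \<Rightarrow> nat) \<Rightarrow> nat \<Rightarrow> (nat \<Rightarrow> (nat \<times> nat) option) \<Rightarrow> nat set set" where
  "marked par n out = {{w, par w} | w. w \<in> {1..n} \<and> out w \<noteq> None}"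

end

theory Submission
  imports Defs
begin

(* Since the labelling is a preorder, the subtree of every vertex w is the interval of labels
   [w, w + ndesc w). The edge from w to its parent lies on the chain of a cross edge (u, v)
   exactly when one of u, v lies in the subtree of w and the other does not; call (u, v)
   escaping w. Going up from the leaves, w sends a message (a, b) iff some cross edge escapes w,
   and then a and b are endpoints of cross edges touching the subtree of w with a <= u and
   v <= b for every escaping (u, v). A subtree containing a and b would, being an interval,
   contain u and v as well; so w stays silent exactly when nothing escapes it. *)

lemma anc_path_Suc:
  "((par ^^ Suc k) v = a \<and> (\<forall>j<Suc k. (par ^^ j) v \<noteq> 1)) \<longleftrightarrow>
     v \<noteq> 1 \<and> (par ^^ k) (par v) = a \<and> (\<forall>j<k. (par ^^ j) (par v) \<noteq> 1)"
  by (auto simp: All_less_Suc2 funpow_swap1)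

lemma anc_iff: "anc par a v \<longleftrightarrow> a = v \<or> (v \<noteq> 1 \<and> anc par a (par v))"
proof -
  have ex_nat: "(\<exists>k. Q k) \<longleftrightarrow> Q 0 \<or> (\<exists>k. Q (Suc k))" for Q :: "nat \<Rightarrow> bool"
    by (metis not0_implies_Suc)
  show ?thesis
    unfolding anc_def ex_nat[where Q = "\<lambda>k. (par ^^ k) v = a \<and> (\<forall>j<k. (par ^^ j) v \<noteq> 1)"]
      anc_path_Suc by auto
qed

lemma anc_refl [simp]: "anc par a a"
  using anc_iff[of par a a] by blast

lemma anc_parent: "v \<noteq> 1 \<Longrightarrow> anc par (par v) v"
  using anc_iff[of par "par v" v] anc_refl by blast

lemma anc_induct [consumes 1, case_names base step]:
  assumes "anc par a v"
    and "P a"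
    and "\<And>x. x \<noteq> 1 \<Longrightarrow> anc par a (par x) \<Longrightarrow> P (par x) \<Longrightarrow> P x"
  shows "P v"
proof -
  obtain k where "(par ^^ k) v = a" "\<forall>j<k. (par ^^ j) v \<noteq> 1"
    using assms(1) by (auto simp: anc_def)
  then show ?thesis
  proof (induction k arbitrary: v)
    case (Suc k)
    have "v \<noteq> 1" and path: "(par ^^ k) (par v) = a" "\<forall>j<k. (par ^^ j) (par v) \<noteq> 1"
      using anc_path_Suc[THEN iffD1, OF conjI[OF Suc.prems]] by auto
    moreover have "anc par a (par v)"
      using path unfolding anc_def by blast
    ultimately show ?case
      using Suc.IH[OF path] assms(3) by blast
  qed (use assms(2) in simp)
qed

lemma anc_trans:
  assumes "anc par a b" "anc par b c"
  shows "anc par a c"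
  using assms(2)
proof (induction rule: anc_induct)
  case (step x)
  then show ?case
    using anc_iff[of par a x] by blast
qed (rule assms(1))

lemma anc_linear:
  assumes "anc par a v" "anc par b v"
  shows "anc par a b \<or> anc par b a"
  using assms
proof (induction arbitrary: b rule: anc_induct)
  case (step x)
  from \<open>anc par b x\<close> have "b = x \<or> anc par b (par x)"
    using anc_iff[of par b x] by blast
  then show ?case
  proof
    assume "b = x"
    then show ?thesis
      using anc_trans[OF step(2) anc_parent[OF step(1)]] by blast
  qed (use step.IH in blast)
qed simp

locale preorder_tree =
  fixes n :: nat and par :: "nat \<Rightarrow> nat"
  assumes rooted: "rooted_tree n par"
    and preorder: "preorder_labeled par n"
begin

lemma child_label:
  assumes "w \<in> {1..n}" "c \<in> children par n w"
  shows "c = w + 1 + (\<Sum>c'\<in>{c' \<in> children par n w. c' < c}. ndesc par n c')"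
  using preorder assms unfolding preorder_labeled_def by blast

lemma par_range: "v \<in> {2..n} \<Longrightarrow> par v \<in> {1..n}"
  using rooted unfolding rooted_tree_def by blast

lemma child_of_par: "v \<in> {2..n} \<Longrightarrow> v \<in> children par n (par v)"
  unfolding children_def by simp

lemma par_less:
  assumes "v \<in> {2..n}"
  shows "par v < v"
  using child_label[OF par_range[OF assms] child_of_par[OF assms]] by linarith

lemma childrenD:
  assumes "c \<in> children par n w"
  shows "c \<in> {2..n}" "par c = w" "w < c" "anc par w c"
  using assms par_less anc_parent[of c par] unfolding children_def by auto

lemma finite_children: "finite (children par n w)"
  unfolding children_def by simp

lemma anc_le:
  assumes "anc par a v" "v \<in> {1..n}"
  shows "a \<le> v" "a \<in> {1..n}"
proof -
  have "a \<le> v \<and> a \<in> {1..n}"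
    using assms
  proof (induction rule: anc_induct)
    case (step x)
    then have "x \<in> {2..n}"
      by auto
    then show ?case
      using step par_less par_range by fastforce
  qed simp
  then show "a \<le> v" "a \<in> {1..n}"
    by auto
qed

lemma anc_antisym: "anc par a b \<Longrightarrow> anc par b a \<Longrightarrow> b \<in> {1..n} \<Longrightarrow> a = b"
  using anc_le by (meson le_antisym)

lemma anc_child_exists:
  assumes "anc par w x" "x \<noteq> w" "x \<in> {1..n}"
  shows "\<exists>c\<in>children par n w. anc par c x"
  using assms
proof (induction rule: anc_induct)
  case (step y)
  then have y: "y \<in> {2..n}"
    by auto
  show ?case
  proof (cases "par y = w")
    case True
    then show ?thesis
      using y child_of_par by force
  next
    case False
    then obtain c where "c \<in> children par n w" "anc par c (par y)"
      using step y par_range by blast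
    then show ?thesis
      using anc_trans anc_parent step(1) by blast
  qed
qed simp

lemma not_anc_sibling:
  assumes "c \<in> children par n w" "c' \<in> children par n w" "c \<noteq> c'"
  shows "\<not> anc par c c'"
proof
  assume "anc par c c'"
  then have "anc par c w"
    using assms anc_iff[of par c c'] childrenD(2) by metis
  moreover have "w \<in> {1..n}"
    using assms(1) childrenD(1,2) par_range by blast
  ultimately show False
    using anc_le(1) childrenD(3)[OF assms(1)] by fastforce
qed

lemma children_anc_unique:
  assumes "c \<in> children par n w" "c' \<in> children par n w" "anc par c x" "anc par c' x"
  shows "c = c'"
  using assms anc_linear not_anc_sibling by blast

lemma ndesc_children_sum_le:
  assumes w: "w \<in> {1..n}"
  shows "1 + (\<Sum>c\<in>children par n w. ndesc par n c) \<le> ndesc par n w"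
proof -
  define D where "D c = {x \<in> {1..n}. anc par c x}" for c
  have disjoint: "D c \<inter> D c' = {}"
    if "c \<in> children par n w" "c' \<in> children par n w" "c \<noteq> c'" for c c'
    using that children_anc_unique unfolding D_def by blast
  have "(\<Sum>c\<in>children par n w. ndesc par n c) = card (\<Union>c\<in>children par n w. D c)"
    unfolding ndesc_def D_def[symmetric]
    by (rule card_UN_disjoint[symmetric]) (use finite_children disjoint in \<open>auto simp: D_def\<close>)
  moreover have "w \<notin> (\<Union>c\<in>children par n w. D c)"
    using anc_le(1) childrenD(3) unfolding D_def by fastforce
  moreover have "insert w (\<Union>c\<in>children par n w. D c) \<subseteq> D w"
    using w anc_refl anc_trans childrenD(4) unfolding D_def by blast
  then have "card (insert w (\<Union>c\<in>children par n w. D c)) \<le> ndesc par n w"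
    unfolding ndesc_def D_def by (intro card_mono) auto
  ultimately show ?thesis
    using finite_children by (simp add: D_def)
qed

lemma anc_less_add_ndesc:
  assumes "w \<in> {1..n}" "anc par w x" "x \<in> {1..n}"
  shows "x < w + ndesc par n w"
  using assms
proof (induction "n - w" arbitrary: w rule: less_induct)
  case less
  show ?case
  proof (cases "x = w")
    case True
    then have "ndesc par n w \<noteq> 0"
      using less.prems unfolding ndesc_def by auto
    then show ?thesis
      using True by simp
  next
    case False
    then obtain c where c: "c \<in> children par n w" "anc par c x"
      using anc_child_exists less.prems by blast
    let ?earlier = "{c' \<in> children par n w. c' < c}"
    have "x < c + ndesc par n c"
      using less.hyps[of c] childrenD[OF c(1)] c(2) less.prems by force
    moreover have "c = w + 1 + (\<Sum>c'\<in>?earlier. ndesc par n c')"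
      using child_label less.prems(1) c(1) by blast
    moreover have "(\<Sum>c'\<in>?earlier. ndesc par n c') + ndesc par n c
        \<le> (\<Sum>c'\<in>children par n w. ndesc par n c')"
    proof -
      have "(\<Sum>c'\<in>?earlier. ndesc par n c') + ndesc par n c = (\<Sum>c'\<in>insert c ?earlier. ndesc par n c')"
        using finite_children by simp
      also have "\<dots> \<le> (\<Sum>c'\<in>children par n w. ndesc par n c')"
        by (rule sum_mono2) (use finite_children c(1) in auto)
      finally show ?thesis .
    qed
    moreover have "1 + (\<Sum>c\<in>children par n w. ndesc par n c) \<le> ndesc par n w"
      using ndesc_children_sum_le less.prems(1) by blast
    ultimately show ?thesis
      by linarith
  qed
qed

lemma subtree_eq_interval:
  assumes "w \<in> {1..n}"
  shows "{x \<in> {1..n}. anc par w x} = {w..<w + ndesc par n w}"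
proof (rule card_subset_eq)
  show "{x \<in> {1..n}. anc par w x} \<subseteq> {w..<w + ndesc par n w}"
    using anc_less_add_ndesc[OF assms] anc_le(1) by auto
qed (simp_all add: ndesc_def)

lemma anc_between:
  assumes "w \<in> {1..n}" "anc par w y" "y \<in> {1..n}" "w \<le> x" "x \<le> y"
  shows "anc par w x"
  using subtree_eq_interval[OF assms(1)] assms(2-) by (simp add: set_eq_iff) (meson le_less_trans)

lemma LCA_spec:
  assumes "u \<in> {1..n}" "v \<in> {1..n}"
  defines "L \<equiv> LCA par n u v"
  shows "L \<in> {1..n}" "anc par L u" "anc par L v"
    and "\<And>b. b \<in> {1..n} \<Longrightarrow> anc par b u \<Longrightarrow> anc par b v \<Longrightarrow> anc par b L"
proof -
  let ?common = "{a \<in> {1..n}. anc par a u \<and> anc par a v}"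
  let ?lca = "\<lambda>a. a \<in> {1..n} \<and> anc par a u \<and> anc par a v \<and>
      (\<forall>b\<in>{1..n}. anc par b u \<and> anc par b v \<longrightarrow> anc par b a)"
  have "1 \<in> ?common"
    using rooted assms(1,2) unfolding rooted_tree_def by auto
  then have max_common: "Max ?common \<in> ?common"
    by (intro Max_in) auto
  have "anc par b (Max ?common)" if "b \<in> ?common" for b
  proof -
    show ?thesis
    proof (cases "anc par (Max ?common) b")
      case True
      then have "Max ?common = b"
        using anc_le(1)[of "Max ?common" b] that by (simp add: le_antisym)
      then show ?thesis
        by simp
    next
      case False
      then show ?thesis
        using anc_linear[of par b u "Max ?common"] max_common that by blast
    qed
  qed
  then have "?lca (Max ?common)"
    using max_common by blast
  moreover have "a = a'" if "?lca a" "?lca a'" for a a'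
    using that anc_antisym by blast
  ultimately have "\<exists>!a. ?lca a"
    by blast
  from theI'[OF this] have "?lca L"
    unfolding L_def LCA_def .
  then show "L \<in> {1..n}" "anc par L u" "anc par L v"
    and "\<And>b. b \<in> {1..n} \<Longrightarrow> anc par b u \<Longrightarrow> anc par b v \<Longrightarrow> anc par b L"
    by auto
qed

lemma strictly_below_LCA_iff:
  assumes "u \<in> {1..n}" "v \<in> {1..n}" "x \<in> {1..n}"
  defines "L \<equiv> LCA par n u v"
  shows "(anc par L x \<and> x \<noteq> L \<and> (anc par x u \<or> anc par x v)) \<longleftrightarrow> anc par x u \<noteq> anc par x v"
proof -
  note L = LCA_spec[OF assms(1,2), folded L_def]
  have below: "anc par L x \<and> x \<noteq> L"
    if "anc par x a" "\<not> anc par x b" "anc par L a" "anc par L b" for a b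
    using anc_linear[OF that(3,1)] anc_trans[OF _ that(4), of x] that(2,4) by blast
  show ?thesis
  proof
    assume "anc par L x \<and> x \<noteq> L \<and> (anc par x u \<or> anc par x v)"
    moreover have "x = L" if "anc par L x" "anc par x u" "anc par x v"
      using that L(4) anc_antisym[of L x] assms(3) by blast
    ultimately show "anc par x u \<noteq> anc par x v"
      by blast
  next
    assume "anc par x u \<noteq> anc par x v"
    then show "anc par L x \<and> x \<noteq> L \<and> (anc par x u \<or> anc par x v)"
      using below[of u v] below[of v u] L(2,3) by blast
  qed
qed

lemma Chain_LCA_Un:
  assumes "u \<in> {1..n}" "v \<in> {1..n}"
  defines "L \<equiv> LCA par n u v"
  shows "Chain par L u \<union> Chain par L v = {{x, par x} | x. x \<in> {1..n} \<and> anc par x u \<noteq> anc par x v}"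
proof -
  have "(anc par L x \<and> x \<noteq> L \<and> (anc par x u \<or> anc par x v))
      \<longleftrightarrow> x \<in> {1..n} \<and> anc par x u \<noteq> anc par x v" for x
    using strictly_below_LCA_iff[OF assms(1,2), of x, folded L_def] anc_le(2) assms(1,2) by blast
  moreover have "Chain par L u \<union> Chain par L v
      = {{x, par x} | x. anc par L x \<and> x \<noteq> L \<and> (anc par x u \<or> anc par x v)}"
    unfolding Chain_def by (auto simp: insert_commute)
  ultimately show ?thesis
    by simp
qed

end

locale marking_process = preorder_tree +
  fixes E :: "nat set set" and out :: "nat \<Rightarrow> (nat \<times> nat) option"
  assumes edges_range: "E \<subseteq> {{x, y} | x y. x \<in> {1..n} \<and> y \<in> {1..n} \<and> x \<noteq> y}"
    and out_fixpoint: "\<forall>w\<in>{1..n}. out w = process_out E par n out w"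
begin

definition touching :: "nat \<Rightarrow> (nat \<times> nat) set" where
  "touching w = {(u, v). {u, v} \<in> cross_edges E par n \<and> u < v \<and> (anc par w u \<or> anc par w v)}"

definition escaping :: "nat \<Rightarrow> (nat \<times> nat) set" where
  "escaping w = {(u, v) \<in> touching w. \<not> (anc par w u \<and> anc par w v)}"

definition out_correct :: "nat \<Rightarrow> bool" where
  "out_correct w \<longleftrightarrow> (out w = None \<longleftrightarrow> escaping w = {}) \<and>
     (\<forall>a b. out w = Some (a, b) \<longrightarrow> a \<in> fst ` touching w \<and> b \<in> snd ` touching w \<and>
        (\<forall>(u, v)\<in>escaping w. a \<le> u \<and> v \<le> b))"

lemma cross_edge_range:
  assumes "{u, v} \<in> cross_edges E par n"
  shows "u \<in> {1..n}" "v \<in> {1..n}"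
proof -
  obtain x y where "{u, v} = {x, y}" "x \<in> {1..n}" "y \<in> {1..n}"
    using assms edges_range unfolding cross_edges_def by blast
  then show "u \<in> {1..n}" "v \<in> {1..n}"
    by (auto simp: doubleton_eq_iff)
qed

lemma touching_range: "(u, v) \<in> touching w \<Longrightarrow> u \<in> {1..n} \<and> v \<in> {1..n}"
  unfolding touching_def using cross_edge_range by blast

lemma touching_child_subset: "c \<in> children par n w \<Longrightarrow> touching c \<subseteq> touching w"
  using childrenD(4) anc_trans unfolding touching_def by blast

lemma finite_inbox: "finite (inbox E par n out w)"
proof -
  have "{(u, v). {u, v} \<in> cross_edges E par n \<and> u < v \<and> (w = u \<or> w = v)} \<subseteq> {1..n} \<times> {1..n}"
    using cross_edge_range by blast
  then have "finite {(u, v). {u, v} \<in> cross_edges E par n \<and> u < v \<and> (w = u \<or> w = v)}"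
    by (rule finite_subset) simp
  moreover have "{m. \<exists>c\<in>children par n w. out c = Some m} \<subseteq> (\<Union>c\<in>children par n w. set_option (out c))"
    by force
  then have "finite {m. \<exists>c\<in>children par n w. out c = Some m}"
    by (rule finite_subset) (simp add: finite_children)
  ultimately show ?thesis
    unfolding inbox_def by (rule finite_UnI)
qed

lemma inbox_touching:
  assumes "\<forall>c\<in>children par n w. out_correct c" "(a, b) \<in> inbox E par n out w"
  shows "a \<in> fst ` touching w" "b \<in> snd ` touching w"
proof -
  have "(a, b) \<in> touching w \<or> (\<exists>c\<in>children par n w. out c = Some (a, b))"
    using assms(2) unfolding inbox_def touching_def by auto
  moreover have "(a, b) \<in> fst ` touching w \<times> snd ` touching w"
    if "c \<in> children par n w" "out c = Some (a, b)" for c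
    using assms(1) that touching_child_subset[OF that(1)] unfolding out_correct_def by blast
  ultimately show "a \<in> fst ` touching w" "b \<in> snd ` touching w"
    by force+
qed

lemma escaping_dominated:
  assumes "\<forall>c\<in>children par n w. out_correct c" "(u, v) \<in> escaping w"
  shows "\<exists>(a, b)\<in>inbox E par n out w. a \<le> u \<and> v \<le> b"
proof (cases "w = u \<or> w = v")
  case True
  then have "(u, v) \<in> inbox E par n out w"
    using assms(2) unfolding inbox_def escaping_def touching_def by auto
  then show ?thesis
    by auto
next
  case False
  have uv: "u \<in> {1..n}" "v \<in> {1..n}" "anc par w u \<or> anc par w v"
    using assms(2) touching_range unfolding escaping_def touching_def by auto
  then obtain c where c: "c \<in> children par n w" "anc par c u \<or> anc par c v"
    using anc_child_exists False by metis
  then have "(u, v) \<in> escaping c"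
    using assms(2) anc_trans[OF childrenD(4)[OF c(1)]] unfolding escaping_def touching_def by auto
  then obtain a b where "out c = Some (a, b)" "a \<le> u \<and> v \<le> b"
    using assms(1) c(1) unfolding out_correct_def by fastforce
  moreover have "(a, b) \<in> inbox E par n out w"
    using calculation(1) c(1) unfolding inbox_def by blast
  ultimately show ?thesis
    by blast
qed

lemma escaping_empty_iff:
  assumes w: "w \<in> {1..n}"
    and a: "a \<in> fst ` touching w" and b: "b \<in> snd ` touching w"
    and bounds: "\<forall>(u, v)\<in>escaping w. a \<le> u \<and> v \<le> b"
  shows "escaping w = {} \<longleftrightarrow> anc par w a \<and> anc par w b"
proof
  assume "escaping w = {}"
  then show "anc par w a \<and> anc par w b"
    using a b unfolding escaping_def touching_def by fastforce
next
  assume sub: "anc par w a \<and> anc par w b"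
  show "escaping w = {}"
  proof (rule ccontr)
    assume "escaping w \<noteq> {}"
    then obtain u v where uv: "(u, v) \<in> escaping w"
      by auto
    then have "a \<le> u" "u < v" "v \<le> b"
      using bounds unfolding escaping_def touching_def by auto
    moreover have "w \<le> a" "b \<in> {1..n}"
      using sub a b touching_range anc_le(1)[of w a] by auto
    ultimately have "anc par w u \<and> anc par w v"
      using anc_between[OF w conjunct2[OF sub] \<open>b \<in> {1..n}\<close>] by simp
    then show False
      using uv unfolding escaping_def by blast
  qed
qed

lemma out_correct_if_children_correct:
  assumes w: "w \<in> {1..n}" and children: "\<forall>c\<in>children par n w. out_correct c"
  shows "out_correct w"
proof -
  let ?M = "inbox E par n out w"
  have out_w: "out w = process_out E par n out w"
    using out_fixpoint w by blast
  show ?thesis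
  proof (cases "?M = {}")
    case True
    then have "escaping w = {}"
      using escaping_dominated[OF children] by fast
    moreover have "out w = None"
      using out_w True unfolding process_out_def by simp
    ultimately show ?thesis
      unfolding out_correct_def by simp
  next
    case False
    define a where "a = Min (fst ` ?M)"
    define b where "b = Max (snd ` ?M)"
    have out_w': "out w = (if anc par w a \<and> anc par w b then None else Some (a, b))"
      using out_w False unfolding process_out_def a_def b_def Let_def by simp
    have "a \<in> fst ` ?M" "b \<in> snd ` ?M"
      using False finite_inbox unfolding a_def b_def by auto
    then have a: "a \<in> fst ` touching w" and b: "b \<in> snd ` touching w"
      using inbox_touching[OF children] by force+
    have bounds: "\<forall>(u, v)\<in>escaping w. a \<le> u \<and> v \<le> b"
    proof clarify
      fix u v
      assume "(u, v) \<in> escaping w"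
      then obtain a' b' where ab': "(a', b') \<in> ?M" "a' \<le> u" "v \<le> b'"
        using escaping_dominated[OF children] by blast
      have "a \<le> a'" "b' \<le> b"
        unfolding a_def b_def using ab'(1) finite_inbox by (force intro: Min_le Max_ge)+
      then show "a \<le> u \<and> v \<le> b"
        using ab' by simp
    qed
    show ?thesis
      using escaping_empty_iff[OF w a b bounds] a b bounds out_w' unfolding out_correct_def by auto
  qed
qed

lemma out_correct: "w \<in> {1..n} \<Longrightarrow> out_correct w"
proof (induction "n - w" arbitrary: w rule: less_induct)
  case less
  have "out_correct c" if "c \<in> children par n w" for c
    using less.hyps[of c] childrenD[OF that] less.prems by force
  then show ?case
    using out_correct_if_children_correct less.prems by blast
qed

lemma out_ne_None_iff:
  assumes "w \<in> {1..n}"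
  shows "out w \<noteq> None \<longleftrightarrow> (\<exists>u v. {u, v} \<in> cross_edges E par n \<and> u < v \<and> anc par w u \<noteq> anc par w v)"
  using out_correct[OF assms] unfolding out_correct_def escaping_def touching_def by auto

end

theorem theorem6p2:
  fixes n :: nat and par :: "nat \<Rightarrow> nat" and E :: "nat set set"
    and out :: "nat \<Rightarrow> (nat \<times> nat) option"
  assumes "rooted_tree n par"
    and "preorder_labeled par n"
    and "E \<subseteq> {{x, y} | x y. x \<in> {1..n} \<and> y \<in> {1..n} \<and> x \<noteq> y}"
    and "tree_edges par n \<subseteq> E"
    and "\<forall>w\<in>{1..n}. out w = process_out E par n out w"
  shows "marked par n out =
    \<Union>{Chain par (LCA par n u v) u \<union> Chain par (LCA par n u v) v | u v.
        {u, v} \<in> cross_edges E par n \<and> u < v}"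
proof -
  interpret marking_process n par E out
    using assms by unfold_locales
  have chains: "Chain par (LCA par n u v) u \<union> Chain par (LCA par n u v) v
      = {{x, par x} | x. x \<in> {1..n} \<and> anc par x u \<noteq> anc par x v}"
    if "{u, v} \<in> cross_edges E par n" for u v
    by (rule Chain_LCA_Un[OF cross_edge_range[OF that]])
  have "marked par n out = {{x, par x} | x. x \<in> {1..n} \<and>
      (\<exists>u v. {u, v} \<in> cross_edges E par n \<and> u < v \<and> anc par x u \<noteq> anc par x v)}"
    unfolding marked_def by (meson out_ne_None_iff)
  also have "\<dots> = \<Union>{{{x, par x} | x. x \<in> {1..n} \<and> anc par x u \<noteq> anc par x v} | u v.
      {u, v} \<in> cross_edges E par n \<and> u < v}"
    by blast
  also have "\<dots> = \<Union>{Chain par (LCA par n u v) u \<union> Chain par (LCA par n u v) v | u v.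
      {u, v} \<in> cross_edges E par n \<and> u < v}"
    using chains by (smt (verit, best) Collect_cong)
  finally show ?thesis .
qed

end
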